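(* Let $A=\prod_{i=1}^n A_i$ with each $A_i\in\{\mathsf P^1,\mathbb F_2\}$, with the product bicharacter, and let $\mathcal G,\mathcal M\subseteq A$ be subgroups with $\mathcal G\subseteq\mathcal M^\perp$. Set $\mathcal L=\mathcal G^\perp$ (so $\mathcal M\subseteq\mathcal L$). Let $R\subseteq[n]$ be a correctable region. Then every coset $[l]\in\mathcal L/\mathcal M$ has a representative $l\in\mathcal L$ with $\operatorname{supp}(l)\cap R=\emptyset$.
   Context: Bicharacter: on $\mathsf P^1=\{I,X,Y,Z\}$ (single-qubit Paulis modulo phase) $\langle a,b\rangle=+1$ if they commute, $-1$ otherwise; on $\mathbb F_2$, $\langle x,y\rangle=(-1)^{xy}$; on $A$ the coordinatewise product. $B^\perp=\{a\in A:\langle a,b\rangle=1\ \forall b\in B\}$. $\operatorname{supp}(a)=\{i:a_i\neq I\}$. A region $R\subseteq[n]$ is correctable if every $e\in\mathcal M^\perp$ with $\operatorname{supp}(e)\subseteq R$ belongs to $\mathcal G$. *)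

theory Defs
  imports Main
begin

(* Single-qubit Paulis modulo phase *)
datatype pauli = PI | PX | PY | PZ

(* multiplication modulo phase: P^1 is isomorphic to F_2^2 *)
fun pmult :: "pauli \<Rightarrow> pauli \<Rightarrow> pauli" where
  "pmult PI q = q"
| "pmult p PI = p"
| "pmult PX PX = PI" | "pmult PX PY = PZ" | "pmult PX PZ = PY"
| "pmult PY PX = PZ" | "pmult PY PY = PI" | "pmult PY PZ = PX"
| "pmult PZ PX = PY" | "pmult PZ PY = PX" | "pmult PZ PZ = PI"

definition pcommute :: "pauli \<Rightarrow> pauli \<Rightarrow> bool" where
  "pcommute p q \<longleftrightarrow> p = PI \<or> q = PI \<or> p = q"

(* Kind of a site: A_i = P^1 (Qubit) or A_i = F_2 (Bit) *)
datatype kind = Qubit | Bit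

datatype site = Q pauli | F bool

fun site_add :: "site \<Rightarrow> site \<Rightarrow> site" where
  "site_add (Q p) (Q q) = Q (pmult p q)"
| "site_add (F x) (F y) = F (x \<noteq> y)"
| "site_add _ _ = undefined"

fun site_char :: "site \<Rightarrow> site \<Rightarrow> int" where
  "site_char (Q p) (Q q) = (if pcommute p q then 1 else -1)"
| "site_char (F x) (F y) = (if x \<and> y then -1 else 1)"
| "site_char _ _ = 1"

definition site_zero :: "kind \<Rightarrow> site" where
  "site_zero k = (case k of Qubit \<Rightarrow> Q PI | Bit \<Rightarrow> F False)"

definition carrierA :: "nat \<Rightarrow> (nat \<Rightarrow> kind) \<Rightarrow> (nat \<Rightarrow> site) set" where
  "carrierA n K = {a. (\<forall>i<n. case K i of Qubit \<Rightarrow> a i \<in> range Q | Bit \<Rightarrow> a i \<in> range F)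
                     \<and> (\<forall>i\<ge>n. a i = Q PI)}"

definition zeroA :: "nat \<Rightarrow> (nat \<Rightarrow> kind) \<Rightarrow> nat \<Rightarrow> site" where
  "zeroA n K = (\<lambda>i. if i < n then site_zero (K i) else Q PI)"

definition addA :: "nat \<Rightarrow> (nat \<Rightarrow> site) \<Rightarrow> (nat \<Rightarrow> site) \<Rightarrow> nat \<Rightarrow> site" where
  "addA n a b = (\<lambda>i. if i < n then site_add (a i) (b i) else Q PI)"

definition charA :: "nat \<Rightarrow> (nat \<Rightarrow> site) \<Rightarrow> (nat \<Rightarrow> site) \<Rightarrow> int" where
  "charA n a b = (\<Prod>i<n. site_char (a i) (b i))"

(* subgroups of A (every element is its own inverse, so closure under + and 0 suffices) *)
definition subgroupA :: "nat \<Rightarrow> (nat \<Rightarrow> kind) \<Rightarrow> (nat \<Rightarrow> site) set \<Rightarrow> bool" where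
  "subgroupA n K G \<longleftrightarrow> G \<subseteq> carrierA n K \<and> zeroA n K \<in> G
      \<and> (\<forall>a\<in>G. \<forall>b\<in>G. addA n a b \<in> G)"

definition perpA :: "nat \<Rightarrow> (nat \<Rightarrow> kind) \<Rightarrow> (nat \<Rightarrow> site) set \<Rightarrow> (nat \<Rightarrow> site) set" where
  "perpA n K B = {a \<in> carrierA n K. \<forall>b\<in>B. charA n a b = 1}"

definition suppA :: "nat \<Rightarrow> (nat \<Rightarrow> site) \<Rightarrow> nat set" where
  "suppA n a = {i. i < n \<and> a i \<noteq> Q PI \<and> a i \<noteq> F False}"

definition correctable ::
  "nat \<Rightarrow> (nat \<Rightarrow> kind) \<Rightarrow> (nat \<Rightarrow> site) set \<Rightarrow> (nat \<Rightarrow> site) set \<Rightarrow> nat set \<Rightarrow> bool" where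
  "correctable n K G M R \<longleftrightarrow> (\<forall>e \<in> perpA n K M. suppA n e \<subseteq> R \<longrightarrow> e \<in> G)"

end

theory Submission
  imports Defs
begin

(* Let A_R (carrier_supp) be the elements of A supported in R.  The bicharacter is nondegenerate
   on the finite group A_R, so character sums give |S| |S^perp| = |A_R| and hence
   S^perp^perp = S for every subgroup S of A_R.  Take S = M|_R, the image of M under restrictA.
   Its annihilator in A_R is M^perp \<inter> A_R, which lies in G by correctability; so for
   l \<in> G^perp the restriction l|_R annihilates S^perp, i.e. l|_R \<in> S, say l|_R = m|_R with
   m \<in> M.  Then m + l represents [l] and vanishes on R. *)

locale nondegenerate_bichar =
  fixes U :: "'a set" and add :: "'a \<Rightarrow> 'a \<Rightarrow> 'a" and zero :: 'a
    and chi :: "'a \<Rightarrow> 'a \<Rightarrow> int"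
  assumes finite_carrier: "finite U"
    and zero_closed: "zero \<in> U"
    and add_closed: "a \<in> U \<Longrightarrow> b \<in> U \<Longrightarrow> add a b \<in> U"
    and add_cancel_left: "a \<in> U \<Longrightarrow> b \<in> U \<Longrightarrow> add a (add a b) = b"
    and chi_add: "a \<in> U \<Longrightarrow> b \<in> U \<Longrightarrow> e \<in> U \<Longrightarrow> chi (add a b) e = chi a e * chi b e"
    and chi_commute: "a \<in> U \<Longrightarrow> b \<in> U \<Longrightarrow> chi a b = chi b a"
    and chi_pm: "a \<in> U \<Longrightarrow> b \<in> U \<Longrightarrow> chi a b = 1 \<or> chi a b = -1"
    and chi_zero: "e \<in> U \<Longrightarrow> chi zero e = 1"
    and chi_nondegenerate: "a \<in> U \<Longrightarrow> a \<noteq> zero \<Longrightarrow> \<exists>e\<in>U. chi a e = -1"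
begin

definition subgrp :: "'a set \<Rightarrow> bool" where
  "subgrp S \<longleftrightarrow> S \<subseteq> U \<and> zero \<in> S \<and> (\<forall>a\<in>S. \<forall>b\<in>S. add a b \<in> S)"

definition perp :: "'a set \<Rightarrow> 'a set" where
  "perp S = {e \<in> U. \<forall>s\<in>S. chi s e = 1}"

lemma perp_subset_carrier: "perp S \<subseteq> U"
  by (auto simp: perp_def)

lemma subgrp_carrier: "subgrp U"
  using zero_closed add_closed by (auto simp: subgrp_def)

lemma bij_betw_add:
  assumes "subgrp S" "s \<in> S"
  shows "bij_betw (add s) S S"
  by (rule bij_betw_byWitness[where f' = "add s"])
    (use assms in \<open>auto simp: subgrp_def add_cancel_left subset_iff\<close>)

lemma sum_eq_zero_if_translate_neg:
  fixes f :: "'a \<Rightarrow> int"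
  assumes "subgrp S" "s \<in> S" and neg: "\<And>t. t \<in> S \<Longrightarrow> f (add s t) = - f t"
  shows "(\<Sum>t\<in>S. f t) = 0"
proof -
  have "(\<Sum>t\<in>S. f t) = (\<Sum>t\<in>S. f (add s t))"
    using sum.reindex_bij_betw[OF bij_betw_add[OF assms(1,2)], of f] by simp
  also have "\<dots> = - (\<Sum>t\<in>S. f t)"
    using neg by (simp add: sum_negf)
  finally show ?thesis by simp
qed

lemma sum_chi_subgrp:
  assumes "subgrp S" "e \<in> U"
  shows "(\<Sum>s\<in>S. chi s e) = (if e \<in> perp S then int (card S) else 0)"
proof (cases "e \<in> perp S")
  case False
  then obtain s where s: "s \<in> S" "chi s e \<noteq> 1"
    using assms(2) by (auto simp: perp_def)
  have SU: "S \<subseteq> U" using assms(1) by (simp add: subgrp_def)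
  with s assms(2) chi_pm have "chi s e = -1" by blast
  with SU s assms(2) have "chi (add s t) e = - chi t e" if "t \<in> S" for t
    using that by (simp add: chi_add subset_iff)
  with sum_eq_zero_if_translate_neg[OF assms(1) s(1)] False show ?thesis by simp
qed (simp add: perp_def)

lemma sum_chi_carrier:
  assumes "s \<in> U"
  shows "(\<Sum>e\<in>U. chi s e) = (if s = zero then int (card U) else 0)"
proof (cases "s = zero")
  case False
  then obtain e0 where e0: "e0 \<in> U" "chi s e0 = -1"
    using chi_nondegenerate assms by blast
  have "chi s (add e0 e) = - chi s e" if "e \<in> U" for e
    using that e0 assms by (simp add: chi_commute[of s] add_closed chi_add)
  with sum_eq_zero_if_translate_neg[OF subgrp_carrier e0(1), of "chi s"] False
  show ?thesis by simp
qed (simp add: chi_zero)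

lemma card_mult_card_perp:
  assumes "subgrp S"
  shows "card S * card (perp S) = card U"
proof -
  have SU: "S \<subseteq> U" "zero \<in> S" using assms by (auto simp: subgrp_def)
  have "int (card S * card (perp S)) = (\<Sum>e\<in>U. if e \<in> perp S then int (card S) else 0)"
    using finite_carrier perp_subset_carrier by (simp add: sum.If_cases Int_absorb1)
  also have "\<dots> = (\<Sum>e\<in>U. \<Sum>s\<in>S. chi s e)"
    using sum_chi_subgrp[OF assms] by simp
  also have "\<dots> = (\<Sum>s\<in>S. \<Sum>e\<in>U. chi s e)"
    by (rule sum.swap)
  also have "\<dots> = (\<Sum>s\<in>S. if s = zero then int (card U) else 0)"
    using SU by (intro sum.cong) (auto simp: sum_chi_carrier)
  also have "\<dots> = int (card U)"
    using SU finite_subset[OF SU(1) finite_carrier] by simp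
  finally show ?thesis by linarith
qed

lemma subgrp_perp:
  assumes "subgrp S"
  shows "subgrp (perp S)"
proof -
  have SU: "S \<subseteq> U" using assms by (simp add: subgrp_def)
  have "chi s (add a b) = 1" if "s \<in> S" "a \<in> perp S" "b \<in> perp S" for s a b
  proof -
    have "s \<in> U" "a \<in> U" "b \<in> U" "chi s a = 1" "chi s b = 1"
      using that SU by (auto simp: perp_def)
    then show ?thesis
      by (simp add: chi_commute[of s] add_closed chi_add)
  qed
  with SU show ?thesis
    by (auto simp: subgrp_def perp_def zero_closed add_closed chi_commute[of _ zero] chi_zero)
qed

lemma perp_perp:
  assumes "subgrp S"
  shows "perp (perp S) = S"
proof -
  have SU: "S \<subseteq> U" using assms by (simp add: subgrp_def)
  have sub: "S \<subseteq> perp (perp S)"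
    using SU by (auto simp: perp_def chi_commute)
  have fin: "finite (perp T)" for T
    using finite_carrier perp_subset_carrier by (rule finite_subset[rotated])
  have "zero \<in> perp S"
    using subgrp_perp[OF assms] by (simp add: subgrp_def)
  then have "card (perp S) > 0"
    using fin card_gt_0_iff by blast
  moreover have "card S * card (perp S) = card (perp S) * card (perp (perp S))"
    using card_mult_card_perp[OF assms] card_mult_card_perp[OF subgrp_perp[OF assms]] by simp
  ultimately have "card (perp (perp S)) = card S" by simp
  with sub fin show ?thesis by (metis card_subset_eq)
qed

end

definition site_of_kind :: "kind \<Rightarrow> site \<Rightarrow> bool" where
  "site_of_kind k x \<longleftrightarrow> (case k of Qubit \<Rightarrow> x \<in> range Q | Bit \<Rightarrow> x \<in> range F)"

lemma site_of_kind_cases: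
  assumes "site_of_kind k x"
  obtains p where "k = Qubit" "x = Q p" | b where "k = Bit" "x = F b"
  using assms by (cases k) (auto simp: site_of_kind_def)

lemma pmult_cancel_left: "pmult p (pmult p q) = q"
  by (cases p; cases q; simp)

lemma pmult_cancel_right: "pmult (pmult p q) q = p"
  by (cases p; cases q; simp)

lemma pmult_self: "pmult p p = PI"
  by (cases p; simp)

lemma pcommute_pmult: "pcommute (pmult p q) r \<longleftrightarrow> pcommute p r = pcommute q r"
  by (cases p; cases q; cases r; simp add: pcommute_def)

lemma site_zero_of_kind: "site_of_kind k (site_zero k)"
  by (cases k) (auto simp: site_of_kind_def site_zero_def)

lemma site_add_of_kind:
  "site_of_kind k x \<Longrightarrow> site_of_kind k y \<Longrightarrow> site_of_kind k (site_add x y)"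
  by (elim site_of_kind_cases) (auto simp: site_of_kind_def)

lemma site_add_cancel_left:
  "site_of_kind k x \<Longrightarrow> site_of_kind k y \<Longrightarrow> site_add x (site_add x y) = y"
  by (elim site_of_kind_cases) (auto simp: pmult_cancel_left)

lemma site_add_cancel_right:
  "site_of_kind k x \<Longrightarrow> site_of_kind k y \<Longrightarrow> site_add (site_add x y) y = x"
  by (elim site_of_kind_cases) (auto simp: pmult_cancel_right)

lemma site_add_self: "site_of_kind k x \<Longrightarrow> site_add x x = site_zero k"
  by (elim site_of_kind_cases) (auto simp: pmult_self site_zero_def)

lemma site_add_zero_zero: "site_add (site_zero k) (site_zero k) = site_zero k"
  by (cases k) (auto simp: site_zero_def)

lemma site_char_add:
  "site_of_kind k x \<Longrightarrow> site_of_kind k y \<Longrightarrow> site_of_kind k e \<Longrightarrow>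
    site_char (site_add x y) e = site_char x e * site_char y e"
  by (elim site_of_kind_cases) (auto simp: pcommute_pmult)

lemma site_char_commute: "site_char x y = site_char y x"
  by (cases x; cases y) (auto simp: pcommute_def)

lemma site_char_pm: "site_char x y = 1 \<or> site_char x y = -1"
  by (cases x; cases y) auto

lemma site_char_zero_right [simp]: "site_char x (site_zero k) = 1"
  by (cases x; cases k) (auto simp: site_zero_def pcommute_def)

lemma site_char_zero_left [simp]: "site_char (site_zero k) x = 1"
  using site_char_zero_right site_char_commute by metis

lemma site_char_nondegenerate:
  assumes "site_of_kind k x" "x \<noteq> site_zero k"
  obtains w where "site_of_kind k w" "site_char x w = -1"
  using assms
proof (cases rule: site_of_kind_cases)
  case (1 p)
  with assms(2) have "p \<noteq> PI" by (simp add: site_zero_def)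
  with 1 have "site_of_kind k (Q (if p = PX then PZ else PX))
      \<and> site_char x (Q (if p = PX then PZ else PX)) = -1"
    by (cases p) (auto simp: site_of_kind_def pcommute_def)
  then show thesis using that by blast
next
  case (2 b)
  with assms(2) show thesis
    by (intro that[of "F True"]) (auto simp: site_of_kind_def site_zero_def)
qed

lemma finite_UNIV_site: "finite (UNIV :: site set)"
proof (rule finite_subset)
  have "p \<in> {PI, PX, PY, PZ}" for p
    by (cases p) auto
  then have "x \<in> {Q PI, Q PX, Q PY, Q PZ, F True, F False}" for x
    by (cases x) auto
  then show "UNIV \<subseteq> {Q PI, Q PX, Q PY, Q PZ, F True, F False}"
    by blast
qed simp

lemma carrierA_iff:
  "a \<in> carrierA n K \<longleftrightarrow> (\<forall>i<n. site_of_kind (K i) (a i)) \<and> (\<forall>i\<ge>n. a i = Q PI)"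
  by (simp add: carrierA_def site_of_kind_def)

lemma finite_carrierA: "finite (carrierA n K)"
proof -
  have "carrierA n K \<subseteq> {a. \<forall>i. (i \<in> {..<n} \<longrightarrow> a i \<in> UNIV) \<and> (i \<notin> {..<n} \<longrightarrow> a i = Q PI)}"
    by (auto simp: carrierA_iff)
  then show ?thesis
    using finite_set_of_finite_funs[OF finite_lessThan finite_UNIV_site] finite_subset by blast
qed

lemma zeroA_in_carrierA: "zeroA n K \<in> carrierA n K"
  by (simp add: carrierA_iff zeroA_def site_zero_of_kind)

lemma addA_in_carrierA:
  "a \<in> carrierA n K \<Longrightarrow> b \<in> carrierA n K \<Longrightarrow> addA n a b \<in> carrierA n K"
  by (simp add: carrierA_iff addA_def site_add_of_kind)

lemma addA_cancel_left:
  "a \<in> carrierA n K \<Longrightarrow> b \<in> carrierA n K \<Longrightarrow> addA n a (addA n a b) = b"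
  by (rule ext) (auto simp: carrierA_iff addA_def site_add_cancel_left)

lemma addA_cancel_right:
  "a \<in> carrierA n K \<Longrightarrow> b \<in> carrierA n K \<Longrightarrow> addA n (addA n a b) b = a"
  by (rule ext) (auto simp: carrierA_iff addA_def site_add_cancel_right)

lemma suppA_carrierA:
  "a \<in> carrierA n K \<Longrightarrow> suppA n a = {i. i < n \<and> a i \<noteq> site_zero (K i)}"
  unfolding suppA_def carrierA_iff
  by (auto elim!: site_of_kind_cases simp: site_zero_def)

lemma suppA_eq_empty_iff: "a \<in> carrierA n K \<Longrightarrow> suppA n a = {} \<longleftrightarrow> a = zeroA n K"
  by (auto simp: suppA_carrierA carrierA_iff zeroA_def)

lemma suppA_addA_subset:
  assumes "a \<in> carrierA n K" "b \<in> carrierA n K"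
  shows "suppA n (addA n a b) \<subseteq> suppA n a \<union> suppA n b"
  using assms addA_in_carrierA[OF assms]
  by (auto simp: suppA_carrierA addA_def site_add_zero_zero)

lemma charA_add:
  "a \<in> carrierA n K \<Longrightarrow> b \<in> carrierA n K \<Longrightarrow> e \<in> carrierA n K \<Longrightarrow>
    charA n (addA n a b) e = charA n a e * charA n b e"
  unfolding charA_def prod.distrib[symmetric]
  by (rule prod.cong) (auto simp: carrierA_iff addA_def site_char_add)

lemma charA_commute: "charA n a b = charA n b a"
  unfolding charA_def by (simp add: site_char_commute)

lemma charA_pm: "charA n a b = 1 \<or> charA n a b = -1"
proof -
  have "(site_char x y)\<^sup>2 = 1" for x y
    using site_char_pm[of x y] by auto
  then have "(charA n a b)\<^sup>2 = 1"
    by (simp add: charA_def prod_power_distrib)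
  then show ?thesis by (simp add: power2_eq_1_iff)
qed

lemma charA_zero_left: "charA n (zeroA n K) e = 1"
  by (simp add: charA_def zeroA_def)

lemma charA_single_site:
  assumes "i < n"
  shows "charA n a ((zeroA n K)(i := w)) = site_char (a i) w"
proof -
  have "charA n a ((zeroA n K)(i := w)) = (\<Prod>j<n. if j = i then site_char (a i) w else 1)"
    unfolding charA_def by (rule prod.cong) (auto simp: zeroA_def)
  with assms show ?thesis by simp
qed

definition carrier_supp :: "nat \<Rightarrow> (nat \<Rightarrow> kind) \<Rightarrow> nat set \<Rightarrow> (nat \<Rightarrow> site) set" where
  "carrier_supp n K R = {a \<in> carrierA n K. suppA n a \<subseteq> R}"

lemma nondegenerate_bichar_carrier_supp:
  "nondegenerate_bichar (carrier_supp n K R) (addA n) (zeroA n K) (charA n)"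
proof
  show "finite (carrier_supp n K R)"
    using finite_carrierA by (simp add: carrier_supp_def)
  show "zeroA n K \<in> carrier_supp n K R"
    using zeroA_in_carrierA suppA_eq_empty_iff[OF zeroA_in_carrierA] by (simp add: carrier_supp_def)
  show "addA n a b \<in> carrier_supp n K R"
    if "a \<in> carrier_supp n K R" "b \<in> carrier_supp n K R" for a b
    using that addA_in_carrierA suppA_addA_subset by (simp add: carrier_supp_def) blast
  show "addA n a (addA n a b) = b"
    if "a \<in> carrier_supp n K R" "b \<in> carrier_supp n K R" for a b
    using that addA_cancel_left by (auto simp: carrier_supp_def)
  show "charA n (addA n a b) e = charA n a e * charA n b e"
    if "a \<in> carrier_supp n K R" "b \<in> carrier_supp n K R" "e \<in> carrier_supp n K R" for a b e
    using that charA_add by (auto simp: carrier_supp_def)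
  show "charA n a b = charA n b a" for a b
    by (rule charA_commute)
  show "charA n a b = 1 \<or> charA n a b = -1" for a b
    by (rule charA_pm)
  show "charA n (zeroA n K) e = 1" for e
    by (rule charA_zero_left)
  show "\<exists>e\<in>carrier_supp n K R. charA n a e = -1"
    if a: "a \<in> carrier_supp n K R" "a \<noteq> zeroA n K" for a
  proof -
    have aA: "a \<in> carrierA n K" "suppA n a \<subseteq> R"
      using a(1) by (simp_all add: carrier_supp_def)
    with a(2) obtain i where i: "i \<in> suppA n a"
      using suppA_eq_empty_iff[OF aA(1)] by blast
    with aA(1) have "i < n" "a i \<noteq> site_zero (K i)" "site_of_kind (K i) (a i)"
      by (auto simp: suppA_carrierA carrierA_iff)
    then obtain w where w: "site_of_kind (K i) w" "site_char (a i) w = -1"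
      using site_char_nondegenerate by metis
    define e where "e = (zeroA n K)(i := w)"
    have "e \<in> carrierA n K"
      using w \<open>i < n\<close> zeroA_in_carrierA by (auto simp: e_def carrierA_iff)
    moreover have "suppA n e \<subseteq> {i}"
      using \<open>e \<in> carrierA n K\<close> by (auto simp: suppA_carrierA e_def zeroA_def)
    then have "suppA n e \<subseteq> R"
      using i aA(2) by blast
    moreover have "charA n a e = -1"
      using charA_single_site[OF \<open>i < n\<close>] w by (simp add: e_def)
    ultimately show ?thesis by (auto simp: carrier_supp_def)
  qed
qed

interpretation supp: nondegenerate_bichar "carrier_supp n K R" "addA n" "zeroA n K" "charA n"
  for n K R
  by (rule nondegenerate_bichar_carrier_supp)

lemma subset_perpA_commute:
  "A \<subseteq> carrierA n K \<Longrightarrow> B \<subseteq> carrierA n K \<Longrightarrow> A \<subseteq> perpA n K B \<longleftrightarrow> B \<subseteq> perpA n K A"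
  unfolding perpA_def subset_iff mem_Collect_eq by (metis charA_commute)

lemma addA_in_perpA:
  assumes "a \<in> perpA n K B" "b \<in> perpA n K B" "B \<subseteq> carrierA n K"
  shows "addA n a b \<in> perpA n K B"
  using assms by (auto simp: perpA_def addA_in_carrierA charA_commute[of n _ "addA n a b"] charA_add)

lemma correctable_iff: "correctable n K G M R \<longleftrightarrow> perpA n K M \<inter> carrier_supp n K R \<subseteq> G"
  by (auto simp: correctable_def carrier_supp_def perpA_def)

definition restrictA :: "nat \<Rightarrow> (nat \<Rightarrow> kind) \<Rightarrow> nat set \<Rightarrow> (nat \<Rightarrow> site) \<Rightarrow> nat \<Rightarrow> site" where
  "restrictA n K R a = (\<lambda>i. if i \<in> R then a i else zeroA n K i)"

lemma restrictA_in_carrier_supp: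
  assumes "a \<in> carrierA n K"
  shows "restrictA n K R a \<in> carrier_supp n K R"
proof -
  have "restrictA n K R a \<in> carrierA n K"
    using assms by (auto simp: carrierA_iff restrictA_def zeroA_def site_zero_of_kind)
  moreover from this have "suppA n (restrictA n K R a) \<subseteq> R"
    by (auto simp: suppA_carrierA restrictA_def zeroA_def)
  ultimately show ?thesis by (simp add: carrier_supp_def)
qed

lemma restrictA_addA:
  "restrictA n K R (addA n a b) = addA n (restrictA n K R a) (restrictA n K R b)"
  by (auto simp: restrictA_def addA_def zeroA_def site_add_zero_zero)

lemma charA_restrictA:
  assumes "e \<in> carrier_supp n K R"
  shows "charA n e (restrictA n K R x) = charA n e x"
  unfolding charA_def
proof (rule prod.cong)
  fix i assume "i \<in> {..<n}"
  moreover have "i \<notin> suppA n e" if "i \<notin> R"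
    using assms that by (auto simp: carrier_supp_def)
  ultimately show "site_char (e i) (restrictA n K R x i) = site_char (e i) (x i)"
    using assms by (auto simp: restrictA_def zeroA_def carrier_supp_def suppA_carrierA)
qed simp

lemma subgrp_restrictA_image:
  assumes "subgroupA n K M"
  shows "supp.subgrp n K R (restrictA n K R ` M)"
proof -
  have "restrictA n K R (zeroA n K) = zeroA n K"
    by (auto simp: restrictA_def zeroA_def)
  then have "zeroA n K \<in> restrictA n K R ` M"
    using assms by (metis image_eqI subgroupA_def)
  with assms show ?thesis
    unfolding supp.subgrp_def subgroupA_def
    by (auto simp: restrictA_in_carrier_supp restrictA_addA[symmetric])
qed

lemma perp_restrictA_image:
  assumes "M \<subseteq> carrierA n K"
  shows "supp.perp n K R (restrictA n K R ` M) = perpA n K M \<inter> carrier_supp n K R"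
  using assms
  by (auto simp: supp.perp_def perpA_def charA_restrictA charA_commute[of n "restrictA n K R _"])
    (auto simp: carrier_supp_def)

lemma restrictA_perpA_in_image:
  assumes M: "subgroupA n K M" and "correctable n K G M R" and l: "l \<in> perpA n K G"
  shows "restrictA n K R l \<in> restrictA n K R ` M"
proof -
  have MA: "M \<subseteq> carrierA n K" and lA: "l \<in> carrierA n K"
    using M l by (auto simp: subgroupA_def perpA_def)
  have "supp.perp n K R (restrictA n K R ` M) \<subseteq> G"
    using assms(2) perp_restrictA_image[OF MA] by (simp add: correctable_iff)
  moreover have "charA n e (restrictA n K R l) = charA n l e" if "e \<in> carrier_supp n K R" for e
    using that by (simp add: charA_restrictA charA_commute)
  ultimately have "charA n e (restrictA n K R l) = 1"
    if "e \<in> supp.perp n K R (restrictA n K R ` M)" for e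
    using that l supp.perp_subset_carrier by (auto simp: perpA_def subset_iff)
  then have "restrictA n K R l \<in> supp.perp n K R (supp.perp n K R (restrictA n K R ` M))"
    using restrictA_in_carrier_supp[OF lA] by (auto simp: supp.perp_def charA_commute)
  then show ?thesis
    using supp.perp_perp[OF subgrp_restrictA_image[OF M]] by simp
qed

lemma suppA_addA_disjoint:
  assumes "a \<in> carrierA n K" "b \<in> carrierA n K" "restrictA n K R a = restrictA n K R b"
  shows "suppA n (addA n a b) \<inter> R = {}"
proof -
  have "a i = b i" if "i \<in> R" for i
    using fun_cong[OF assms(3), of i] that by (simp add: restrictA_def)
  then show ?thesis
    using assms(1) addA_in_carrierA[OF assms(1,2)]
    by (auto simp: suppA_carrierA addA_def carrierA_iff site_add_self)
qed

theorem lemma7: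
  fixes n :: nat and K :: "nat \<Rightarrow> kind"
    and G M :: "(nat \<Rightarrow> site) set" and R :: "nat set"
  assumes "subgroupA n K G" and "subgroupA n K M"
    and "G \<subseteq> perpA n K M"
    and "R \<subseteq> {..<n}"
    and "correctable n K G M R"
  shows "\<forall>l \<in> perpA n K G. \<exists>l' \<in> perpA n K G.
           addA n l' l \<in> M \<and> suppA n l' \<inter> R = {}"
proof
  fix l assume l: "l \<in> perpA n K G"
  have GA: "G \<subseteq> carrierA n K" and MA: "M \<subseteq> carrierA n K" and lA: "l \<in> carrierA n K"
    using assms(1,2) l by (auto simp: subgroupA_def perpA_def)
  obtain m where m: "m \<in> M" "restrictA n K R m = restrictA n K R l"
    using restrictA_perpA_in_image[OF assms(2,5) l] by auto
  with MA have mA: "m \<in> carrierA n K" by auto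
  have "m \<in> perpA n K G"
    using assms(3) m(1) subset_perpA_commute[OF GA MA] by auto
  then have "addA n m l \<in> perpA n K G"
    using addA_in_perpA l GA by blast
  moreover have "addA n (addA n m l) l \<in> M"
    using addA_cancel_right[OF mA lA] m(1) by simp
  moreover have "suppA n (addA n m l) \<inter> R = {}"
    using suppA_addA_disjoint[OF mA lA m(2)] .
  ultimately show "\<exists>l' \<in> perpA n K G. addA n l' l \<in> M \<and> suppA n l' \<inter> R = {}"
    by blast
qed

end
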